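(* Let $\lambda$ be a nonzero real number. For any integer $p\ge1$, \[ \sum_{k=1}^{\infty}\frac{H_{k,\lambda}^{(p)}}{k(k+1)(k+2)}=\frac{1}{2}\bigg(\sum_{k=1}^{p}(-1)^{k-1}\zeta_{\lambda}(p+2-k)+\frac{(-1)^{p}}{\lambda+1}\bigg). \] More generally, for any integers $n,p$ with $n\ge2$, $p\ge1$, \[ \sum_{k=1}^{\infty}\frac{H_{k,\lambda}^{(p)}}{\binom{k+n-1}{n}(k+n)}=(n-1)\sum_{j=0}^{n-2}\binom{n-2}{j}(-1)^{j}I_{\lambda}(j+1,p+1), \] where $I_{\lambda}(r,q)=\int_{0}^{1}x^{r-1}\mathrm{Li}_{q,\lambda}(x)\,dx$.
   Context: Let $\lambda$ be a nonzero real number. For real $x$ and $\mu\neq 0$, set $(x)_{0,\mu}=1$ and $(x)_{n,\mu}=x(x-\mu)\cdots(x-(n-1)\mu)$ for $n\ge1$. The degenerate polylogarithm is $\mathrm{Li}_{k,\lambda}(t)=\sum_{n=1}^{\infty}\frac{(-1)^{n-1}\lambda^{n-1}(1)_{n,1/\lambda}}{(n-1)!\,n^{k}}t^{n}$ for $k\in\mathbb{Z}$ (for $|t|<1$, and by the same series where it converges). The degenerate zeta function is $\zeta_{\lambda}(s)=\sum_{n=1}^{\infty}\frac{(-1)^{n-1}\lambda^{n-1}(1)_{n,1/\lambda}}{(n-1)!\,n^{s}}$ for $\mathrm{Re}(s)>1$. The degenerate higher-order harmonic numbers are $H_{0,\lambda}^{(k)}=0$ and $H_{n,\lambda}^{(k)}=\sum_{l=1}^{n}\frac{(-\lambda)^{l-1}(1)_{l,1/\lambda}}{l^{k}(l-1)!}$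 for $n\ge1$; equivalently $\frac{\mathrm{Li}_{k,\lambda}(t)}{1-t}=\sum_{n\ge1}H_{n,\lambda}^{(k)}t^{n}$.
   Formalization: The first identity is asserted only when $\lambda\neq -1$ and the series for $\zeta_{\lambda}(p+2-k)$ converge for k = 1, ..., p, the second only when each $x^{j}\mathrm{Li}_{p+1,\lambda}(x)$, j = 0, ..., n-2, is integrable on [0,1]. The statement above fails without it. *)

theory Defs
  imports "HOL-Analysis.Analysis"
begin

definition gen_fall :: "real \<Rightarrow> nat \<Rightarrow> real \<Rightarrow> real" where
  "gen_fall x n mu = (\<Prod>i<n. x - real i * mu)"

definition dcoeff :: "real \<Rightarrow> nat \<Rightarrow> real" where
  "dcoeff lam n = (-1) ^ (n - 1) * lam ^ (n - 1) * gen_fall 1 n (1 / lam) / fact (n - 1)"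

definition deg_Li :: "int \<Rightarrow> real \<Rightarrow> real \<Rightarrow> real" where
  "deg_Li k lam t = (\<Sum>m. dcoeff lam (Suc m) / real (Suc m) powi k * t ^ Suc m)"

definition deg_zeta :: "real \<Rightarrow> real \<Rightarrow> real" where
  "deg_zeta lam s = (\<Sum>m. dcoeff lam (Suc m) / real (Suc m) powr s)"

definition deg_H :: "nat \<Rightarrow> int \<Rightarrow> real \<Rightarrow> real" where
  "deg_H n k lam = (\<Sum>l=1..n. (- lam) ^ (l - 1) * gen_fall 1 l (1 / lam)
                                / (real l powi k * fact (l - 1)))"

definition deg_I :: "real \<Rightarrow> nat \<Rightarrow> int \<Rightarrow> real" where
  "deg_I lam r q = integral {0..1} (\<lambda>x. x ^ (r - 1) * deg_Li q lam x)"

end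

theory Submission
  imports Defs
begin

(* Write a_i = dcoeff lam (i+1) and d_i = a_i / (i+1)^p, so that H_{k+1} = d_0 + ... + d_k.
   In both series the weights are differences U_i - U_{i+1} of the Beta values
   U_i = B(n, i+1) (with n = 2 and a factor 1/2 in the first series), so Abel summation turns
   the series into sum_i d_i U_i. The boundary term vanishes because a_{i+1} / a_i =
   (i+1-lam)/(i+1) is eventually positive, i.e. a has eventually constant sign.
   For n = 2, partial fractions reduce sum_i d_i U_i to alternating zeta values and the
   telescoping series sum_i a_i / ((i+1)(i+2)) = 1/(1+lam). In general the binomial expansion
   (i+1) B(n, i+1) = (n-1) sum_j (-1)^j C(n-2,j) / (i+j+2), together with termwise integration
   of the power series of Li_{p+1} (monotone convergence, again by the eventual sign),
   identifies sum_i d_i U_i with the integrals I_lam(j+1, p+1). *)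

section \<open>Eventually signed sequences and summation by parts\<close>

definition eventually_signed :: "(nat \<Rightarrow> real) \<Rightarrow> bool" where
  "eventually_signed a \<longleftrightarrow>
     (\<forall>\<^sub>F i in sequentially. 0 \<le> a i) \<or> (\<forall>\<^sub>F i in sequentially. a i \<le> 0)"

lemma eventually_signed_divide_nonneg:
  assumes "eventually_signed a" "\<And>i. 0 \<le> w i"
  shows "eventually_signed (\<lambda>i. a i / w i)"
  using assms(1) unfolding eventually_signed_def
  by (metis (mono_tags, lifting) assms(2) divide_nonneg_nonneg divide_nonpos_nonneg eventually_mono)

lemma eventually_signed_if_ratio_nonneg:
  assumes rec: "\<And>i. a (Suc i) = a i * r i" and r: "\<forall>\<^sub>F i in sequentially. 0 \<le> r i"
  shows "eventually_signed a"
proof -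
  obtain M where M: "\<And>i. i \<ge> M \<Longrightarrow> 0 \<le> r i"
    using r by (auto simp: eventually_sequentially)
  have sign: "0 \<le> s * a i" if "i \<ge> M" "0 \<le> s * a M" for i and s :: real
    using that(1)
  proof (induction i rule: dec_induct)
    case (step i)
    then show ?case
      using mult_nonneg_nonneg[OF step.IH M[OF step.hyps(1)]] by (simp add: rec mult.assoc)
  qed (use that in simp)
  show ?thesis
  proof (cases "0 \<le> a M")
    case True
    then show ?thesis
      using sign[of _ 1] unfolding eventually_signed_def eventually_sequentially by auto
  next
    case False
    then show ?thesis
      using sign[of _ "-1"] unfolding eventually_signed_def eventually_sequentially by auto
  qed
qed

lemma summable_abs_if_eventually_signed:
  fixes a :: "nat \<Rightarrow> real"
  assumes "eventually_signed a" "summable a"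
  shows "summable (\<lambda>i. \<bar>a i\<bar>)"
  using assms(1) unfolding eventually_signed_def
proof
  assume "\<forall>\<^sub>F i in sequentially. 0 \<le> a i"
  then have "\<forall>\<^sub>F i in sequentially. \<bar>a i\<bar> = a i"
    by (rule eventually_mono) simp
  then show ?thesis using assms(2) summable_cong by metis
next
  assume "\<forall>\<^sub>F i in sequentially. a i \<le> 0"
  then have "\<forall>\<^sub>F i in sequentially. \<bar>a i\<bar> = - a i"
    by (rule eventually_mono) simp
  then show ?thesis using assms(2) summable_cong summable_minus_iff by metis
qed

lemma summation_by_parts:
  fixes d U :: "nat \<Rightarrow> 'a::comm_ring"
  shows "(\<Sum>k<N. (\<Sum>i\<le>k. d i) * (U k - U (Suc k)))
           = (\<Sum>i<N. d i * U i) - (\<Sum>i<N. d i) * U N"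
proof (induction N)
  case (Suc N)
  then show ?case by (simp add: algebra_simps lessThan_Suc_atMost[symmetric])
qed simp

lemma partial_sum_mult_tendsto_zero:
  fixes d U :: "nat \<Rightarrow> real"
  assumes d: "\<forall>\<^sub>F i in sequentially. 0 \<le> d i"
    and U: "decseq U" "U \<longlonglongrightarrow> 0" and sm: "summable (\<lambda>i. d i * U i)"
  shows "(\<lambda>N. (\<Sum>i<N. d i) * U N) \<longlonglongrightarrow> 0"
proof (rule LIMSEQ_I)
  fix r :: real
  assume "0 < r"
  obtain M where M: "\<And>i. i \<ge> M \<Longrightarrow> 0 \<le> d i"
    using d by (auto simp: eventually_sequentially)
  have U0: "0 \<le> U i" for i
    using decseq_ge[OF U] .
  define T where "T K = (\<Sum>i. d i * U i) - (\<Sum>i<K. d i * U i)" for K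
  have "T \<longlonglongrightarrow> 0"
    unfolding T_def
    using tendsto_diff[OF tendsto_const[of "\<Sum>i. d i * U i"] summable_LIMSEQ[OF sm]] by simp
  then obtain K0 where K0: "\<And>K. K \<ge> K0 \<Longrightarrow> \<bar>T K\<bar> < r / 2"
    using LIMSEQ_D[of T 0 "r / 2"] \<open>0 < r\<close> by auto
  define K where "K = max K0 M"
  (* For N \<ge> K, U decreasing gives (\<Sum>i<N. d i) * U N \<le> (\<Sum>i<K. d i) * U N + T K. *)
  obtain N0 where N0: "\<And>N. N \<ge> N0 \<Longrightarrow> \<bar>(\<Sum>i<K. d i) * U N\<bar> < r / 2"
    using LIMSEQ_D[OF tendsto_mult_right_zero[OF U(2)], of "r / 2" "\<Sum>i<K. d i"] \<open>0 < r\<close>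
    by auto
  show "\<exists>N0. \<forall>N\<ge>N0. norm ((\<Sum>i<N. d i) * U N - 0) < r"
  proof (intro exI allI impI)
    fix N
    assume N: "max N0 K \<le> N"
    have split: "(\<Sum>i<N. f i) = (\<Sum>i<K. f i) + (\<Sum>i\<in>{K..<N}. f i)" for f :: "nat \<Rightarrow> real"
      using N by (simp add: atLeast0LessThan[symmetric] sum.atLeastLessThan_concat)
    have tail_nonneg: "0 \<le> (\<Sum>i\<in>{K..<N}. d i * U N)"
      using M U0 by (intro sum_nonneg mult_nonneg_nonneg) (auto simp: K_def)
    have "(\<Sum>i\<in>{K..<N}. d i * U N) \<le> (\<Sum>i\<in>{K..<N}. d i * U i)"
      using M decseqD[OF U(1)] by (intro sum_mono mult_left_mono) (auto simp: K_def)
    also have "\<dots> = (\<Sum>i<N. d i * U i) - (\<Sum>i<K. d i * U i)"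
      using split[of "\<lambda>i. d i * U i"] by simp
    also have "\<dots> \<le> T K"
      unfolding T_def using N M U0
      by (intro diff_right_mono sum_le_suminf[OF sm]) (auto simp: K_def)
    finally have tail_le: "(\<Sum>i\<in>{K..<N}. d i * U N) \<le> T K" .
    have "(\<Sum>i<N. d i) * U N = (\<Sum>i<K. d i) * U N + (\<Sum>i\<in>{K..<N}. d i * U N)"
      by (simp add: split[of d] distrib_right sum_distrib_right)
    then show "norm ((\<Sum>i<N. d i) * U N - 0) < r"
      using tail_nonneg tail_le N0[of N] K0[of K] N by (simp add: K_def abs_if split: if_splits)
  qed
qed

lemma sums_summation_by_parts:
  fixes d U :: "nat \<Rightarrow> real"
  assumes d: "eventually_signed d" and U: "decseq U" "U \<longlonglongrightarrow> 0"
    and sm: "summable (\<lambda>i. d i * U i)"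
  shows "(\<lambda>k. (\<Sum>i\<le>k. d i) * (U k - U (Suc k))) sums (\<Sum>i. d i * U i)"
proof -
  have "(\<lambda>N. (\<Sum>i<N. d i) * U N) \<longlonglongrightarrow> 0"
    using d unfolding eventually_signed_def
  proof
    assume "\<forall>\<^sub>F i in sequentially. 0 \<le> d i"
    then show ?thesis using partial_sum_mult_tendsto_zero U sm by blast
  next
    assume "\<forall>\<^sub>F i in sequentially. d i \<le> 0"
    then have "(\<lambda>N. (\<Sum>i<N. - d i) * U N) \<longlonglongrightarrow> 0"
      using sm by (intro partial_sum_mult_tendsto_zero U) (auto elim: eventually_mono intro: summable_minus)
    then have "(\<lambda>N. - ((\<Sum>i<N. - d i) * U N)) \<longlonglongrightarrow> - 0"
      by (rule tendsto_minus)
    then show ?thesis by (simp add: sum_negf)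
  qed
  then have "(\<lambda>N. (\<Sum>i<N. d i * U i) - (\<Sum>i<N. d i) * U N) \<longlonglongrightarrow> (\<Sum>i. d i * U i) - 0"
    by (intro tendsto_diff summable_LIMSEQ sm)
  then show ?thesis
    unfolding sums_def summation_by_parts by simp
qed

section \<open>Beta values at integers\<close>

(* The Beta value B(k+1, m+1). *)
definition beta_nat :: "nat \<Rightarrow> nat \<Rightarrow> real" where
  "beta_nat k m = fact k * fact m / fact (k + m + 1)"

lemma beta_nat_pos: "0 < beta_nat k m"
  by (simp add: beta_nat_def)

lemma beta_nat_diff: "beta_nat k m - beta_nat k (Suc m) = beta_nat (Suc k) m"
proof -
  have "k + Suc m + 1 = Suc (k + m + 1)" "Suc k + m + 1 = Suc (k + m + 1)"
    by simp_all
  then have "beta_nat k (Suc m) = beta_nat k m * (real (Suc m) / real (k + m + 2))"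
    and "beta_nat (Suc k) m = beta_nat k m * (real (Suc k) / real (k + m + 2))"
    unfolding beta_nat_def fact_Suc by (simp_all add: field_simps)
  then have "beta_nat k (Suc m) + beta_nat (Suc k) m
      = beta_nat k m * ((real (Suc m) + real (Suc k)) / real (k + m + 2))"
    by (simp add: add_divide_distrib distrib_left)
  also have "\<dots> = beta_nat k m"
    by (simp add: ac_simps)
  finally show ?thesis
    by simp
qed

lemma beta_nat_eq_inverse_binomial:
  "beta_nat k m = 1 / (real ((k + m) choose k) * real (k + m + 1))"
proof -
  have "real ((k + m) choose k) * real (k + m + 1) = fact (k + m + 1) / (fact k * fact m)"
    by (simp add: binomial_fact field_simps)
  then show ?thesis
    by (simp add: beta_nat_def)
qed

lemma beta_nat_Suc_left:
  "real (Suc k) * beta_nat k (Suc m) = real (Suc m) * beta_nat (Suc k) m"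
  by (simp add: beta_nat_def algebra_simps)

lemma decseq_beta_nat: "decseq (beta_nat k)"
  using beta_nat_diff beta_nat_pos
  by (intro decseq_SucI) (metis diff_ge_0_iff_ge less_eq_real_def)

lemma beta_nat_tendsto_zero: "beta_nat k \<longlonglongrightarrow> 0"
proof (rule tendsto_sandwich[of "\<lambda>_. 0" _ _ "\<lambda>m. inverse (real (Suc m))"])
  have "beta_nat k m \<le> inverse (real (Suc m))" for m
  proof -
    have "1 \<le> real ((k + m) choose k)"
      using zero_less_binomial[of k "k + m"] by linarith
    then have "1 * real (Suc m) \<le> real ((k + m) choose k) * real (k + m + 1)"
      by (intro mult_mono) auto
    then show ?thesis
      unfolding beta_nat_eq_inverse_binomial inverse_eq_divide
      by (intro divide_left_mono) auto
  qed
  then show "\<forall>\<^sub>F m in sequentially. beta_nat k m \<le> inverse (real (Suc m))"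
    by simp
  show "(\<lambda>m. inverse (real (Suc m))) \<longlonglongrightarrow> 0"
    using LIMSEQ_inverse_real_of_nat .
qed (simp_all add: less_imp_le[OF beta_nat_pos])

lemma alternating_binomial_sum_Suc:
  fixes g :: "nat \<Rightarrow> 'a::comm_ring_1"
  shows "(\<Sum>j\<le>Suc k. (-1) ^ j * of_nat (Suc k choose j) * g j)
           = (\<Sum>j\<le>k. (-1) ^ j * of_nat (k choose j) * (g j - g (Suc j)))"
proof -
  define h where "h j = (-1) ^ j * of_nat (k choose j) * g j" for j
  have "(\<Sum>j\<le>k. h j) = (\<Sum>j\<le>Suc k. h j)"
    by (simp add: h_def binomial_eq_0)
  also have "\<dots> = g 0 + (\<Sum>j\<le>k. (-1) ^ Suc j * of_nat (k choose Suc j) * g (Suc j))"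
    by (subst sum.atMost_Suc_shift) (simp add: h_def del: power_Suc)
  finally have h_shift: "(\<Sum>j\<le>k. h j) = \<dots>" .
  have "(\<Sum>j\<le>Suc k. (-1) ^ j * of_nat (Suc k choose j) * g j)
      = g 0 + (\<Sum>j\<le>k. (-1) ^ Suc j * of_nat (k choose Suc j) * g (Suc j))
            + (\<Sum>j\<le>k. (-1) ^ Suc j * of_nat (k choose j) * g (Suc j))"
    by (subst sum.atMost_Suc_shift) (simp add: sum.distrib distrib_left distrib_right del: power_Suc)
  also have "\<dots> = (\<Sum>j\<le>k. h j) - (\<Sum>j\<le>k. (-1) ^ j * of_nat (k choose j) * g (Suc j))"
    unfolding h_shift by (simp add: sum_negf)
  finally show ?thesis
    by (simp add: h_def right_diff_distrib sum_subtractf)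
qed

lemma alternating_binomial_sum_eq_beta_nat:
  "(\<Sum>j\<le>k. (-1) ^ j * real (k choose j) / real (m + j + 1)) = beta_nat k m"
proof (induction k arbitrary: m)
  case 0
  then show ?case by (simp add: beta_nat_def)
next
  case (Suc k)
  have "(\<Sum>j\<le>Suc k. (-1) ^ j * real (Suc k choose j) / real (m + j + 1))
      = (\<Sum>j\<le>k. (-1) ^ j * real (k choose j) * (1 / real (m + j + 1) - 1 / real (Suc m + j + 1)))"
    using alternating_binomial_sum_Suc[of k "\<lambda>j. 1 / real (m + j + 1)"] by simp
  also have "\<dots> = beta_nat k m - beta_nat k (Suc m)"
    by (simp add: Suc.IH[symmetric] algebra_simps sum_subtractf sum_distrib_left)
  finally show ?case
    by (simp add: beta_nat_diff)
qed

section \<open>Power series on the unit interval\<close>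

lemma summable_power_series_ratio_bound:
  fixes c r :: "nat \<Rightarrow> real"
  assumes c: "\<And>m. \<bar>c (Suc m)\<bar> \<le> r m * \<bar>c m\<bar>" and r: "r \<longlonglongrightarrow> 1" and x: "\<bar>x\<bar> < 1"
  shows "summable (\<lambda>m. c m * x ^ m)"
proof -
  define q where "q = (1 + \<bar>x\<bar>) / 2"
  have "(\<lambda>m. r m * \<bar>x\<bar>) \<longlonglongrightarrow> 1 * \<bar>x\<bar>"
    by (intro tendsto_mult r tendsto_const)
  moreover have "1 * \<bar>x\<bar> < q"
    using x by (simp add: q_def)
  ultimately have "\<forall>\<^sub>F m in sequentially. r m * \<bar>x\<bar> < q"
    by (rule order_tendstoD(2))
  then obtain N where N: "\<And>m. m \<ge> N \<Longrightarrow> r m * \<bar>x\<bar> < q"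
    by (auto simp: eventually_sequentially)
  show ?thesis
  proof (rule summable_ratio_test[of q N])
    show "q < 1"
      using x by (simp add: q_def)
  next
    fix m
    assume "N \<le> m"
    have "\<bar>c (Suc m)\<bar> * \<bar>x\<bar> ^ Suc m \<le> (r m * \<bar>c m\<bar>) * \<bar>x\<bar> ^ Suc m"
      using c by (rule mult_right_mono) simp
    also have "\<dots> = (r m * \<bar>x\<bar>) * (\<bar>c m\<bar> * \<bar>x\<bar> ^ m)"
      by (simp add: ac_simps)
    also have "\<dots> \<le> q * (\<bar>c m\<bar> * \<bar>x\<bar> ^ m)"
      using N[OF \<open>N \<le> m\<close>] by (intro mult_right_mono) auto
    finally show "norm (c (Suc m) * x ^ Suc m) \<le> q * norm (c m * x ^ m)"
      by (simp add: abs_mult power_abs)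
  qed
qed

lemma monomial_has_integral_01: "((\<lambda>x::real. x ^ n) has_integral 1 / real (Suc n)) {0..1}"
proof -
  have "((\<lambda>x::real. x ^ n) has_integral (1 ^ Suc n / real (Suc n) - 0 ^ Suc n / real (Suc n))) {0..1}"
  proof (rule fundamental_theorem_of_calculus)
    fix x :: real
    have "((\<lambda>x. x ^ Suc n / real (Suc n)) has_real_derivative x ^ n) (at x within {0..1})"
      by (rule derivative_eq_intros refl | simp)+
    then show "((\<lambda>x. x ^ Suc n / real (Suc n)) has_vector_derivative x ^ n) (at x within {0..1})"
      by (simp add: has_real_derivative_iff_has_vector_derivative)
  qed simp
  then show ?thesis
    by simp
qed

lemma power_series_partial_sum_has_integral:
  fixes c :: "nat \<Rightarrow> real"
  shows "((\<lambda>x. x ^ k * (\<Sum>m<N. c m * x ^ m)) has_integral (\<Sum>m<N. c m / real (m + k + 1))) {0<..<1}"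
proof -
  have "((\<lambda>x. \<Sum>m<N. c m * x ^ (m + k)) has_integral (\<Sum>m<N. c m / real (m + k + 1))) {0..1}"
    using has_integral_mult_right[OF monomial_has_integral_01, of "c _" "_ + k"]
    by (intro has_integral_sum finite_lessThan) (simp add: add.assoc)
  moreover have "(\<lambda>x. x ^ k * (\<Sum>m<N. c m * x ^ m)) = (\<lambda>x. \<Sum>m<N. c m * x ^ (m + k))"
    by (simp add: fun_eq_iff sum_distrib_left power_add ac_simps)
  ultimately show ?thesis
    by (simp add: has_integral_Icc_iff_Ioo)
qed

lemma integral_tendsto_if_incseq_integrable_limit:
  fixes f :: "nat \<Rightarrow> real \<Rightarrow> real"
  assumes f_int: "\<And>N. f N integrable_on S" and g_int: "g integrable_on S"
    and f_mono: "\<And>N x. x \<in> S \<Longrightarrow> f N x \<le> f (Suc N) x"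
    and f_lim: "\<And>x. x \<in> S \<Longrightarrow> (\<lambda>N. f N x) \<longlonglongrightarrow> g x"
  shows "(\<lambda>N. integral S (f N)) \<longlonglongrightarrow> integral S g"
proof -
  have f_inc: "incseq (\<lambda>N. f N x)" if "x \<in> S" for x
    using f_mono[OF that] by (intro incseq_SucI)
  have "f N x \<le> g x" if "x \<in> S" for N x
    using incseq_le[OF f_inc[OF that] f_lim[OF that]] .
  moreover have "f 0 x \<le> f N x" if "x \<in> S" for N x
    using f_inc[OF that] by (simp add: incseq_def)
  ultimately have "integral S (f 0) \<le> integral S (f N) \<and> integral S (f N) \<le> integral S g" for N
    using integral_le[OF f_int f_int] integral_le[OF f_int g_int] by blast
  then have "range (\<lambda>N. integral S (f N)) \<subseteq> {integral S (f 0)..integral S g}"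
    by auto
  then have "bounded (range (\<lambda>N. integral S (f N)))"
    by (rule bounded_subset[OF bounded_closed_interval])
  then show ?thesis
    using monotone_convergence_increasing[OF f_int f_mono f_lim] by blast
qed

lemma power_series_integral_sums_nonneg:
  fixes c :: "nat \<Rightarrow> real"
  assumes c: "\<forall>\<^sub>F m in sequentially. 0 \<le> c m"
    and sm: "\<And>x. 0 < x \<Longrightarrow> x < 1 \<Longrightarrow> summable (\<lambda>m. c m * x ^ m)"
    and int: "(\<lambda>x. x ^ k * (\<Sum>m. c m * x ^ m)) integrable_on {0<..<1}"
  shows "(\<lambda>m. c m / real (m + k + 1))
           sums integral {0<..<1} (\<lambda>x. x ^ k * (\<Sum>m. c m * x ^ m))"
proof -
  obtain M where M: "\<And>m. m \<ge> M \<Longrightarrow> 0 \<le> c m"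
    using c by (auto simp: eventually_sequentially)
  define S :: "real set" where "S = {0<..<1}"
  define g where "g = (\<lambda>x::real. x ^ k * (\<Sum>m. c m * x ^ m))"
  define f where "f N = (\<lambda>x::real. x ^ k * (\<Sum>m<N + M. c m * x ^ m))" for N
  have f_integral: "(f N has_integral (\<Sum>m<N + M. c m / real (m + k + 1))) S" for N
    unfolding f_def S_def by (rule power_series_partial_sum_has_integral)
  then have f_int: "f N integrable_on S" for N
    by blast
  have f_mono: "f N x \<le> f (Suc N) x" if "x \<in> S" for N x
  proof -
    have "0 \<le> x ^ k * (c (N + M) * x ^ (N + M))"
      using M[of "N + M"] that by (simp add: S_def)
    then show ?thesis
      by (simp add: f_def distrib_left)
  qed
  have f_lim: "(\<lambda>N. f N x) \<longlonglongrightarrow> g x" if "x \<in> S" for x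
  proof -
    have "(\<lambda>N. \<Sum>m<N. c m * x ^ m) \<longlonglongrightarrow> (\<Sum>m. c m * x ^ m)"
      using sm that by (intro summable_LIMSEQ) (simp add: S_def)
    then have "(\<lambda>N. \<Sum>m<N + M. c m * x ^ m) \<longlonglongrightarrow> (\<Sum>m. c m * x ^ m)"
      by (rule LIMSEQ_ignore_initial_segment)
    then show ?thesis
      unfolding f_def g_def by (rule tendsto_mult_left)
  qed
  have "g integrable_on S"
    using int by (simp add: S_def g_def)
  then have "(\<lambda>N. integral S (f N)) \<longlonglongrightarrow> integral S g"
    using integral_tendsto_if_incseq_integrable_limit f_int f_mono f_lim by blast
  then have "(\<lambda>N. \<Sum>m<N + M. c m / real (m + k + 1)) \<longlonglongrightarrow> integral S g"
    using integral_unique[OF f_integral] by simp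
  then show ?thesis
    unfolding sums_def S_def g_def by (rule LIMSEQ_offset)
qed

lemma power_series_integral_sums:
  fixes c :: "nat \<Rightarrow> real"
  assumes c: "eventually_signed c"
    and sm: "\<And>x. 0 < x \<Longrightarrow> x < 1 \<Longrightarrow> summable (\<lambda>m. c m * x ^ m)"
    and int: "(\<lambda>x. x ^ k * (\<Sum>m. c m * x ^ m)) integrable_on {0<..<1}"
  shows "(\<lambda>m. c m / real (m + k + 1))
           sums integral {0<..<1} (\<lambda>x. x ^ k * (\<Sum>m. c m * x ^ m))"
  using c unfolding eventually_signed_def
proof
  assume "\<forall>\<^sub>F m in sequentially. 0 \<le> c m"
  then show ?thesis
    using power_series_integral_sums_nonneg sm int by blast
next
  assume "\<forall>\<^sub>F m in sequentially. c m \<le> 0"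
  then have c': "\<forall>\<^sub>F m in sequentially. 0 \<le> - c m"
    by (auto elim: eventually_mono)
  have neg: "x ^ k * (\<Sum>m. - c m * x ^ m) = - (x ^ k * (\<Sum>m. c m * x ^ m))"
    if "x \<in> {0<..<1}" for x
    using sm[of x] that by (simp add: suminf_minus)
  have "(\<lambda>x. x ^ k * (\<Sum>m. - c m * x ^ m)) integrable_on {0<..<1}
      \<longleftrightarrow> (\<lambda>x. - (x ^ k * (\<Sum>m. c m * x ^ m))) integrable_on {0<..<1}"
    by (rule integrable_cong) (rule neg)
  then have "(\<lambda>x. x ^ k * (\<Sum>m. - c m * x ^ m)) integrable_on {0<..<1}"
    using integrable_neg[OF int] by blast
  moreover have "summable (\<lambda>m. - c m * x ^ m)" if "0 < x" "x < 1" for x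
    using summable_minus[OF sm[OF that]] by simp
  ultimately have "(\<lambda>m. - c m / real (m + k + 1))
      sums integral {0<..<1} (\<lambda>x. x ^ k * (\<Sum>m. - c m * x ^ m))"
    by (rule power_series_integral_sums_nonneg[OF c', rotated])
  also have "integral {0<..<1} (\<lambda>x. x ^ k * (\<Sum>m. - c m * x ^ m))
      = - integral {0<..<1} (\<lambda>x. x ^ k * (\<Sum>m. c m * x ^ m))"
    unfolding integral_neg[symmetric] by (rule integral_cong) (rule neg)
  finally have "(\<lambda>m. - (- c m / real (m + k + 1)))
      sums (- (- integral {0<..<1} (\<lambda>x. x ^ k * (\<Sum>m. c m * x ^ m))))"
    by (rule sums_minus)
  then show ?thesis
    by simp
qed

section \<open>Coefficients of the degenerate polylogarithm\<close>

lemma dcoeff_1: "dcoeff lam (Suc 0) = 1"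
  by (simp add: dcoeff_def gen_fall_def)

lemma dcoeff_Suc_Suc:
  assumes "lam \<noteq> 0"
  shows "dcoeff lam (Suc (Suc i)) = dcoeff lam (Suc i) * ((real i + 1 - lam) / (real i + 1))"
proof -
  define G where "G = gen_fall 1 (Suc i) (1 / lam)"
  have "gen_fall 1 (Suc (Suc i)) (1 / lam) = G * (1 - (real i + 1) / lam)"
    by (simp add: gen_fall_def G_def)
  moreover have "lam ^ Suc i * (G * (1 - (real i + 1) / lam)) = - (lam ^ i * (G * (real i + 1 - lam)))"
    using assms by (simp add: field_simps)
  ultimately have "dcoeff lam (Suc (Suc i)) = (-1) ^ i * lam ^ i * G * (real i + 1 - lam) / fact (Suc i)"
    unfolding dcoeff_def by (simp add: mult.assoc)
  also have "\<dots> = dcoeff lam (Suc i) * ((real i + 1 - lam) / (real i + 1))"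
    unfolding dcoeff_def G_def by (simp add: field_simps)
  finally show ?thesis .
qed

lemma dcoeff_eventually_signed:
  assumes "lam \<noteq> 0"
  shows "eventually_signed (\<lambda>i. dcoeff lam (Suc i))"
proof (rule eventually_signed_if_ratio_nonneg)
  show "dcoeff lam (Suc (Suc i)) = dcoeff lam (Suc i) * ((real i + 1 - lam) / (real i + 1))" for i
    by (rule dcoeff_Suc_Suc[OF assms])
  have "0 \<le> (real i + 1 - lam) / (real i + 1)" if "i \<ge> nat \<lceil>lam\<rceil>" for i
    using that by (intro divide_nonneg_pos) linarith+
  then show "\<forall>\<^sub>F i in sequentially. 0 \<le> (real i + 1 - lam) / (real i + 1)"
    unfolding eventually_sequentially by blast
qed

lemma deg_H_Suc_eq_sum:
  "deg_H (Suc k) (int p) lam = (\<Sum>i\<le>k. dcoeff lam (Suc i) / real (Suc i) ^ p)"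
proof -
  have "deg_H (Suc k) (int p) lam = (\<Sum>i=0..k. (- lam) ^ i * gen_fall 1 (Suc i) (1 / lam)
                                / (real (Suc i) powi int p * fact i))"
    unfolding deg_H_def One_nat_def sum.shift_bounds_cl_Suc_ivl by simp
  also have "\<dots> = (\<Sum>i\<le>k. dcoeff lam (Suc i) / real (Suc i) ^ p)"
    unfolding atLeast0AtMost
    by (intro sum.cong refl) (simp add: dcoeff_def power_int_of_nat power_minus[of lam] field_simps)
  finally show ?thesis .
qed

lemma dcoeff_telescoping_sum:
  assumes "lam \<noteq> 0" "lam \<noteq> -1"
  shows "(\<Sum>i<N. dcoeff lam (Suc i) / (real (Suc i) * real (Suc i + 1)))
           = (1 - dcoeff lam (Suc N) / real (Suc N)) / (1 + lam)"
proof (induction N)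
  case 0
  then show ?case by (simp add: dcoeff_1)
next
  case (Suc N)
  define b where "b = dcoeff lam (Suc N) / real (Suc N)"
  have b_Suc: "dcoeff lam (Suc (Suc N)) / real (Suc (Suc N)) = b * ((real N + 1 - lam) / (real N + 2))"
    unfolding b_def dcoeff_Suc_Suc[OF assms(1)] by (simp add: field_simps)
  have r: "1 - (real N + 1 - lam) / (real N + 2) = (1 + lam) / (real N + 2)"
    by (simp add: field_simps)
  have "1 + lam \<noteq> 0"
    using assms(2) by auto
  have "(b - b * ((real N + 1 - lam) / (real N + 2))) / (1 + lam)
      = b * (1 - (real N + 1 - lam) / (real N + 2)) / (1 + lam)"
    by (simp add: right_diff_distrib)
  also have "\<dots> = b / (real N + 2)"
    unfolding r using \<open>1 + lam \<noteq> 0\<close> by simp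
  also have "\<dots> = dcoeff lam (Suc N) / (real (Suc N) * real (Suc N + 1))"
    by (simp add: b_def add.commute)
  finally have step: "dcoeff lam (Suc N) / (real (Suc N) * real (Suc N + 1))
      = (b - dcoeff lam (Suc (Suc N)) / real (Suc (Suc N))) / (1 + lam)"
    unfolding b_Suc ..
  show ?case
    unfolding sum.lessThan_Suc Suc.IH step b_def add_divide_distrib[symmetric] by simp
qed

lemma not_summable_harmonic_lower_bound:
  fixes f :: "nat \<Rightarrow> real"
  assumes "0 < L" "\<And>i. i \<ge> K \<Longrightarrow> L / real (Suc i) \<le> f i"
  shows "\<not> summable f"
proof
  assume "summable f"
  then have "summable (\<lambda>i. inverse (real (Suc i)))"
  proof (rule summable_comparison_test'[OF summable_divide[of f L], where N = K])
    fix i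
    assume "i \<ge> K"
    then show "norm (inverse (real (Suc i))) \<le> f i / L"
      using assms by (simp add: field_simps)
  qed
  then have "summable (\<lambda>i. inverse (real i))"
    using summable_Suc_iff[of "\<lambda>i. inverse (real i)"] by simp
  then show False
    using not_summable_harmonic by blast
qed

lemma tendsto_zero_if_eventually_decreasing_summable_div_Suc:
  fixes b :: "nat \<Rightarrow> real"
  assumes dec: "\<And>N. N \<ge> M \<Longrightarrow> b (Suc N) \<le> b N" and nonneg: "\<And>N. 0 \<le> b N"
    and sm: "summable (\<lambda>N. b N / real (Suc N))"
  shows "b \<longlonglongrightarrow> 0"
proof -
  have "decseq (\<lambda>N. b (N + M))"
    using dec by (intro decseq_SucI) simp
  moreover have "\<forall>N. 0 \<le> b (N + M)"
    using nonneg by simp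
  ultimately obtain L where L: "(\<lambda>N. b (N + M)) \<longlonglongrightarrow> L" "\<And>N. L \<le> b (N + M)"
    using decseq_convergent by metis
  have "L = 0"
  proof (rule ccontr)
    assume "L \<noteq> 0"
    moreover have "0 \<le> L"
      using L(1) by (rule LIMSEQ_le_const) (use nonneg in auto)
    moreover have "L / real (Suc N) \<le> b N / real (Suc N)" if "N \<ge> M" for N
      using L(2)[of "N - M"] that by (simp add: divide_right_mono)
    ultimately show False
      using not_summable_harmonic_lower_bound[of L M] sm by simp
  qed
  then show ?thesis
    using L(1) by (simp add: LIMSEQ_offset)
qed

lemma abs_dcoeff_div_Suc_Suc:
  assumes "lam \<noteq> 0"
  shows "\<bar>dcoeff lam (Suc (Suc N)) / real (Suc (Suc N))\<bar>
           = \<bar>dcoeff lam (Suc N) / real (Suc N)\<bar> * (\<bar>real N + 1 - lam\<bar> / (real N + 2))"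
proof -
  have "dcoeff lam (Suc (Suc N)) / real (Suc (Suc N))
      = dcoeff lam (Suc N) / real (Suc N) * ((real N + 1 - lam) / (real N + 2))"
    unfolding dcoeff_Suc_Suc[OF assms] by (simp add: field_simps)
  then show ?thesis
    by (simp add: abs_mult abs_divide)
qed

lemma abs_dcoeff_div_Suc_ge_1:
  assumes "lam < -1"
  shows "1 \<le> \<bar>dcoeff lam (Suc N) / real (Suc N)\<bar>"
proof (induction N)
  case 0
  then show ?case by (simp add: dcoeff_1)
next
  case (Suc N)
  have "1 \<le> \<bar>real N + 1 - lam\<bar> / (real N + 2)"
    using assms by simp
  then have "1 * 1 \<le> \<bar>dcoeff lam (Suc N) / real (Suc N)\<bar> * (\<bar>real N + 1 - lam\<bar> / (real N + 2))"
    by (rule mult_mono[OF Suc.IH]) auto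
  moreover have "lam \<noteq> 0"
    using assms by simp
  ultimately show ?case
    using abs_dcoeff_div_Suc_Suc[of lam N] by simp
qed

lemma dcoeff_div_Suc_tendsto_zero:
  assumes lam: "lam \<noteq> 0" "lam \<noteq> -1"
    and sm: "summable (\<lambda>i. dcoeff lam (Suc i) / real (Suc i) ^ 2)"
  shows "(\<lambda>N. dcoeff lam (Suc N) / real (Suc N)) \<longlonglongrightarrow> 0"
proof -
  define b where "b = (\<lambda>N. \<bar>dcoeff lam (Suc N) / real (Suc N)\<bar>)"
  have b_Suc: "b (Suc N) = b N * (\<bar>real N + 1 - lam\<bar> / (real N + 2))" for N
    unfolding b_def using abs_dcoeff_div_Suc_Suc[OF lam(1)] by simp
  have "summable (\<lambda>N. \<bar>dcoeff lam (Suc N) / real (Suc N) ^ 2\<bar>)"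
    using summable_abs_if_eventually_signed[OF
        eventually_signed_divide_nonneg[OF dcoeff_eventually_signed[OF lam(1)]] sm]
    by simp
  then have sm_b: "summable (\<lambda>N. b N / real (Suc N))"
    by (simp add: b_def abs_divide power2_eq_square)
  (* b grows when lam < -1 and eventually decreases otherwise; summability of b N / (N + 1)
     rules out a positive lower bound in both cases. *)
  show ?thesis
  proof (cases "lam < -1")
    case True
    have "1 \<le> b N" for N
      unfolding b_def using abs_dcoeff_div_Suc_ge_1[OF True] by simp
    then have "1 / real (Suc N) \<le> b N / real (Suc N)" for N
      by (simp add: divide_right_mono)
    then show ?thesis
      using not_summable_harmonic_lower_bound[of 1 0] sm_b by simp
  next
    case False
    have b_dec: "b (Suc N) \<le> b N" if "N \<ge> nat \<lceil>lam\<rceil>" for N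
    proof -
      have "\<bar>real N + 1 - lam\<bar> / (real N + 2) \<le> 1"
        using that False lam(2) by (simp add: divide_le_eq_1)
      then have "b N * (\<bar>real N + 1 - lam\<bar> / (real N + 2)) \<le> b N * 1"
        by (rule mult_left_mono) (simp add: b_def)
      then show ?thesis
        by (simp add: b_Suc)
    qed
    have "b \<longlonglongrightarrow> 0"
      using b_dec sm_b
      by (intro tendsto_zero_if_eventually_decreasing_summable_div_Suc[where M = "nat \<lceil>lam\<rceil>"])
        (simp_all add: b_def)
    then show ?thesis
      unfolding b_def by (rule tendsto_rabs_zero_iff[THEN iffD1])
  qed
qed

lemma dcoeff_sums_inverse:
  assumes "lam \<noteq> 0" "lam \<noteq> -1"
    and "summable (\<lambda>i. dcoeff lam (Suc i) / real (Suc i) ^ 2)"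
  shows "(\<lambda>i. dcoeff lam (Suc i) / (real (Suc i) * real (Suc i + 1))) sums (1 / (lam + 1))"
proof -
  have "(\<lambda>N. (1 - dcoeff lam (Suc N) / real (Suc N)) / (1 + lam)) \<longlonglongrightarrow> (1 - 0) / (1 + lam)"
    using assms by (intro tendsto_divide tendsto_diff tendsto_const dcoeff_div_Suc_tendsto_zero) auto
  then show ?thesis
    unfolding sums_def dcoeff_telescoping_sum[OF assms(1,2)] by (simp add: add.commute)
qed

lemma summable_deg_Li_coeffs:
  assumes lam: "lam \<noteq> 0" and x: "\<bar>x\<bar> < 1"
  shows "summable (\<lambda>m. dcoeff lam (Suc m) / real (Suc m) ^ q * x ^ m)"
proof (rule summable_power_series_ratio_bound[OF _ _ x])
  define r where "r m = \<bar>1 - lam * inverse (real (Suc m))\<bar>" for m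
  show "(\<lambda>m. r m) \<longlonglongrightarrow> 1"
    unfolding r_def
    using tendsto_rabs[OF tendsto_diff[OF tendsto_const
          tendsto_mult_right_zero[OF LIMSEQ_inverse_real_of_nat, of lam]], of 1]
    by simp
  show "\<bar>dcoeff lam (Suc (Suc m)) / real (Suc (Suc m)) ^ q\<bar>
      \<le> r m * \<bar>dcoeff lam (Suc m) / real (Suc m) ^ q\<bar>" for m
  proof -
    have "(real i + 1 - lam) / (real i + 1) = 1 - lam * inverse (real (Suc i))" for i
      by (simp add: field_simps)
    then have "\<bar>dcoeff lam (Suc (Suc m))\<bar> = r m * \<bar>dcoeff lam (Suc m)\<bar>"
      unfolding dcoeff_Suc_Suc[OF lam] r_def by (simp add: abs_mult)
    then have "\<bar>dcoeff lam (Suc (Suc m)) / real (Suc (Suc m)) ^ q\<bar>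
        = r m * \<bar>dcoeff lam (Suc m)\<bar> / real (Suc (Suc m)) ^ q"
      by (simp add: abs_divide)
    also have "\<dots> \<le> r m * \<bar>dcoeff lam (Suc m)\<bar> / real (Suc m) ^ q"
      by (intro divide_left_mono power_mono) (auto simp: r_def)
    also have "\<dots> = r m * \<bar>dcoeff lam (Suc m) / real (Suc m) ^ q\<bar>"
      by (simp add: abs_divide)
    finally show ?thesis .
  qed
qed

lemma deg_Li_eq_power_series:
  assumes "lam \<noteq> 0" "\<bar>x\<bar> < 1"
  shows "deg_Li (int q) lam x = x * (\<Sum>m. dcoeff lam (Suc m) / real (Suc m) ^ q * x ^ m)"
  unfolding deg_Li_def power_int_of_nat
  using suminf_mult[OF summable_deg_Li_coeffs[OF assms], of x]
  by (simp add: ac_simps)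

lemma deg_I_sums:
  assumes lam: "lam \<noteq> 0"
    and int: "(\<lambda>x. x ^ j * deg_Li (int q) lam x) integrable_on {0..1}"
  shows "(\<lambda>i. dcoeff lam (Suc i) / real (Suc i) ^ q / real (i + j + 2))
           sums deg_I lam (Suc j) (int q)"
proof -
  define c where "c m = dcoeff lam (Suc m) / real (Suc m) ^ q" for m
  have Li: "x ^ j * deg_Li (int q) lam x = x ^ Suc j * (\<Sum>m. c m * x ^ m)"
    if "x \<in> {0<..<1}" for x
    using deg_Li_eq_power_series[OF lam, of x q] that by (simp add: c_def)
  have "(\<lambda>x. x ^ j * deg_Li (int q) lam x) integrable_on {0<..<1}
      \<longleftrightarrow> (\<lambda>x. x ^ Suc j * (\<Sum>m. c m * x ^ m)) integrable_on {0<..<1}"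
    by (rule integrable_cong) (rule Li)
  then have c_int: "(\<lambda>x. x ^ Suc j * (\<Sum>m. c m * x ^ m)) integrable_on {0<..<1}"
    using int integrable_on_open_interval_real by blast
  have c_signed: "eventually_signed c"
    unfolding c_def by (intro eventually_signed_divide_nonneg dcoeff_eventually_signed[OF lam]) simp
  have c_summable: "summable (\<lambda>m. c m * x ^ m)" if "0 < x" "x < 1" for x
    using summable_deg_Li_coeffs[OF lam, of x q] that by (simp add: c_def)
  have "(\<lambda>m. c m / real (m + Suc j + 1))
      sums integral {0<..<1} (\<lambda>x. x ^ Suc j * (\<Sum>m. c m * x ^ m))"
    by (rule power_series_integral_sums[OF c_signed c_summable c_int])
  also have "integral {0<..<1} (\<lambda>x. x ^ Suc j * (\<Sum>m. c m * x ^ m)) = deg_I lam (Suc j) (int q)"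
    unfolding deg_I_def integral_open_interval_real diff_Suc_1
    by (rule integral_cong) (rule Li[symmetric])
  finally show ?thesis
    by (simp add: c_def)
qed

section \<open>Series of degenerate harmonic numbers\<close>

lemma deg_zeta_of_nat: "deg_zeta lam (real N) = (\<Sum>i. dcoeff lam (Suc i) / real (Suc i) ^ N)"
  by (simp add: deg_zeta_def powr_realpow)

lemma alternating_sum_Suc:
  fixes f :: "nat \<Rightarrow> 'a::comm_ring_1"
  shows "(\<Sum>k=1..Suc p. (-1) ^ (k - 1) * f (Suc p + 2 - k))
           = f (p + 2) - (\<Sum>k=1..p. (-1) ^ (k - 1) * f (p + 2 - k))"
proof -
  have "(\<Sum>k=1..Suc p. (-1) ^ (k - 1) * f (Suc p + 2 - k))
      = f (p + 2) + (\<Sum>k=Suc 1..Suc p. (-1) ^ (k - 1) * f (Suc p + 2 - k))"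
    by (subst sum.atLeast_Suc_atMost) auto
  also have "(\<Sum>k=Suc 1..Suc p. (-1) ^ (k - 1) * f (Suc p + 2 - k))
      = - (\<Sum>k=1..p. (-1) ^ (k - 1) * f (p + 2 - k))"
    unfolding sum.shift_bounds_cl_Suc_ivl sum_negf[symmetric]
    by (intro sum.cong refl) (auto simp: power_eq_if)
  finally show ?thesis
    by simp
qed

lemma dcoeff_sums_alternating_zeta:
  assumes lam: "lam \<noteq> 0" "lam \<noteq> -1"
    and sm2: "summable (\<lambda>i. dcoeff lam (Suc i) / real (Suc i) ^ 2)"
    and sm: "\<And>m. m \<in> {2..p + 1} \<Longrightarrow> summable (\<lambda>i. dcoeff lam (Suc i) / real (Suc i) ^ m)"
  shows "(\<lambda>i. dcoeff lam (Suc i) / (real (Suc i) ^ Suc p * real (Suc i + 1)))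
           sums ((\<Sum>k=1..p. (-1) ^ (k - 1) * deg_zeta lam (real (p + 2 - k))) + (-1) ^ p / (lam + 1))"
  using sm
proof (induction p)
  case 0
  then show ?case
    using dcoeff_sums_inverse[OF lam sm2] by simp
next
  case (Suc p)
  have IH: "(\<lambda>i. dcoeff lam (Suc i) / (real (Suc i) ^ Suc p * real (Suc i + 1)))
      sums ((\<Sum>k=1..p. (-1) ^ (k - 1) * deg_zeta lam (real (p + 2 - k))) + (-1) ^ p / (lam + 1))"
    by (rule Suc.IH, rule Suc.prems) auto
  have "(\<lambda>i. dcoeff lam (Suc i) / real (Suc i) ^ (p + 2)) sums deg_zeta lam (real (p + 2))"
    unfolding deg_zeta_of_nat by (intro summable_sums Suc.prems) simp
  from sums_diff[OF this IH]
  have "(\<lambda>i. dcoeff lam (Suc i) / real (Suc i) ^ (p + 2)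
             - dcoeff lam (Suc i) / (real (Suc i) ^ Suc p * real (Suc i + 1)))
      sums ((\<Sum>k=1..Suc p. (-1) ^ (k - 1) * deg_zeta lam (real (Suc p + 2 - k)))
              + (-1) ^ Suc p / (lam + 1))"
    unfolding alternating_sum_Suc[where f = "\<lambda>k. deg_zeta lam (real k)"] by (simp add: diff_diff_eq)
  moreover have "dcoeff lam (Suc i) / real (Suc i) ^ (p + 2)
        - dcoeff lam (Suc i) / (real (Suc i) ^ Suc p * real (Suc i + 1))
      = dcoeff lam (Suc i) / (real (Suc i) ^ Suc (Suc p) * real (Suc i + 1))" for i
    by (simp add: divide_simps) (simp add: algebra_simps)
  ultimately show ?case
    by (simp only:)
qed

lemma deg_H_sums_by_parts:
  assumes lam: "lam \<noteq> 0"
    and S: "(\<lambda>i. dcoeff lam (Suc i) / real (Suc i) ^ p * beta_nat k i) sums S"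
  shows "(\<lambda>i. deg_H (Suc i) (int p) lam * beta_nat (Suc k) i) sums S"
proof -
  define d where "d i = dcoeff lam (Suc i) / real (Suc i) ^ p" for i
  have "eventually_signed d"
    unfolding d_def by (intro eventually_signed_divide_nonneg dcoeff_eventually_signed[OF lam]) simp
  then have "(\<lambda>i. (\<Sum>j\<le>i. d j) * (beta_nat k i - beta_nat k (Suc i))) sums (\<Sum>i. d i * beta_nat k i)"
    using S unfolding d_def[symmetric]
    by (intro sums_summation_by_parts decseq_beta_nat beta_nat_tendsto_zero sums_summable)
  then show ?thesis
    using S by (simp add: d_def deg_H_Suc_eq_sum beta_nat_diff sums_iff)
qed

lemma deg_H_cubic_sums:
  assumes lam: "lam \<noteq> 0" "lam \<noteq> -1" and p: "p \<ge> 1"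
    and sm: "\<And>m. m \<in> {2..p + 1} \<Longrightarrow> summable (\<lambda>i. dcoeff lam (Suc i) / real (Suc i) ^ m)"
  shows "(\<lambda>i. deg_H (Suc i) (int p) lam / (real (Suc i) * real (Suc i + 1) * real (Suc i + 2)))
           sums ((1/2) * ((\<Sum>k=1..p. (-1) ^ (k - 1) * deg_zeta lam (real (p + 2 - k)))
                          + (-1) ^ p / (lam + 1)))"
proof -
  have fact3: "fact (i + 3) = real (Suc i) * real (Suc i + 1) * real (Suc i + 2) * fact i" for i
    by (simp add: numeral_3_eq_3 algebra_simps)
  have "dcoeff lam (Suc i) / real (Suc i) ^ p * beta_nat 1 i
      = dcoeff lam (Suc i) / (real (Suc i) ^ Suc p * real (Suc i + 1))" for i
    by (simp add: beta_nat_eq_inverse_binomial)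
  then have "(\<lambda>i. dcoeff lam (Suc i) / real (Suc i) ^ p * beta_nat 1 i)
      sums ((\<Sum>k=1..p. (-1) ^ (k - 1) * deg_zeta lam (real (p + 2 - k))) + (-1) ^ p / (lam + 1))"
    using dcoeff_sums_alternating_zeta[OF lam sm[of 2] sm] p by simp
  then have "(\<lambda>i. deg_H (Suc i) (int p) lam * beta_nat 2 i)
      sums ((\<Sum>k=1..p. (-1) ^ (k - 1) * deg_zeta lam (real (p + 2 - k))) + (-1) ^ p / (lam + 1))"
    using deg_H_sums_by_parts[OF lam(1)] by (simp add: numeral_2_eq_2)
  moreover have "deg_H (Suc i) (int p) lam / (real (Suc i) * real (Suc i + 1) * real (Suc i + 2))
      = 1/2 * (deg_H (Suc i) (int p) lam * beta_nat 2 i)" for i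
    unfolding beta_nat_def using fact3[of i] by (simp add: add.commute)
  ultimately show ?thesis
    by (simp only:) (rule sums_mult)
qed

lemma scaled_alternating_binomial_sum_eq_beta_nat:
  "real (Suc k) * (\<Sum>j=0..k. real (k choose j) * (-1) ^ j * (a / real (Suc i) ^ Suc p / real (i + j + 2)))
     = a / real (Suc i) ^ p * beta_nat (Suc k) i"
proof -
  have "(\<Sum>j=0..k. real (k choose j) * (-1) ^ j * (a / real (Suc i) ^ Suc p / real (i + j + 2)))
      = a / real (Suc i) ^ Suc p * beta_nat k (Suc i)"
    unfolding alternating_binomial_sum_eq_beta_nat[symmetric] atLeast0AtMost sum_distrib_left
    by (intro sum.cong refl) (simp add: algebra_simps)
  then have "real (Suc k) * (\<Sum>j=0..k. real (k choose j) * (-1) ^ j * (a / real (Suc i) ^ Suc p / real (i + j + 2)))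
      = a / real (Suc i) ^ Suc p * (real (Suc k) * beta_nat k (Suc i))"
    by (simp add: ac_simps)
  also have "\<dots> = a / real (Suc i) ^ Suc p * (real (Suc i) * beta_nat (Suc k) i)"
    by (simp only: beta_nat_Suc_left)
  also have "\<dots> = a / real (Suc i) ^ p * beta_nat (Suc k) i"
    by (simp add: divide_simps)
  finally show ?thesis .
qed

lemma deg_H_binomial_sums:
  assumes lam: "lam \<noteq> 0" and n: "n \<ge> 2"
    and int: "\<forall>j\<le>n-2. (\<lambda>x. x ^ j * deg_Li (int p + 1) lam x) integrable_on {0..1}"
  shows "(\<lambda>i. deg_H (Suc i) (int p) lam / (real ((Suc i + n - 1) choose n) * real (Suc i + n)))
           sums (real (n - 1) * (\<Sum>j=0..n-2. real ((n - 2) choose j) * (-1) ^ j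
                                   * deg_I lam (j + 1) (int p + 1)))"
proof -
  obtain k where k: "n = Suc (Suc k)"
    using n by (metis add_2_eq_Suc le_Suc_ex)
  have "(\<lambda>i. dcoeff lam (Suc i) / real (Suc i) ^ Suc p / real (i + j + 2))
      sums deg_I lam (j + 1) (int p + 1)" if "j \<le> k" for j
  proof -
    have e: "int p + 1 = int (Suc p)"
      by simp
    have "(\<lambda>x. x ^ j * deg_Li (int (Suc p)) lam x) integrable_on {0..1}"
      using int that unfolding e by (simp add: k)
    from deg_I_sums[OF lam this] show ?thesis
      unfolding e by simp
  qed
  then have "(\<lambda>i. real (Suc k) * (\<Sum>j=0..k. real (k choose j) * (-1) ^ j
                 * (dcoeff lam (Suc i) / real (Suc i) ^ Suc p / real (i + j + 2))))
      sums (real (Suc k) * (\<Sum>j=0..k. real (k choose j) * (-1) ^ j * deg_I lam (j + 1) (int p + 1)))"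
    by (intro sums_mult sums_sum) auto
  then have "(\<lambda>i. deg_H (Suc i) (int p) lam * beta_nat (Suc (Suc k)) i)
      sums (real (Suc k) * (\<Sum>j=0..k. real (k choose j) * (-1) ^ j * deg_I lam (j + 1) (int p + 1)))"
    unfolding scaled_alternating_binomial_sum_eq_beta_nat by (rule deg_H_sums_by_parts[OF lam])
  then show ?thesis
    by (simp add: k beta_nat_eq_inverse_binomial add_ac)
qed

theorem theorem2:
  fixes lam :: real
  assumes "lam \<noteq> 0"
  shows
   "(\<forall>p::nat. p \<ge> 1 \<longrightarrow> lam \<noteq> -1 \<longrightarrow>
       (\<forall>m::nat\<in>{2..p+1}. summable (\<lambda>i. dcoeff lam (Suc i) / real (Suc i) powr real m)) \<longrightarrow>
       ((\<lambda>i. deg_H (Suc i) (int p) lam / (real (Suc i) * real (Suc i + 1) * real (Suc i + 2)))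
          sums ((1/2) * ((\<Sum>k=1..p. (-1) ^ (k - 1) * deg_zeta lam (real (p + 2 - k)))
                         + (-1) ^ p / (lam + 1)))))
    \<and>
    (\<forall>n p::nat. n \<ge> 2 \<longrightarrow> p \<ge> 1 \<longrightarrow>
       (\<forall>j\<le>n-2. (\<lambda>x. x ^ j * deg_Li (int p + 1) lam x) integrable_on {0..1}) \<longrightarrow>
       ((\<lambda>i. deg_H (Suc i) (int p) lam / (real ((Suc i + n - 1) choose n) * real (Suc i + n)))
          sums (real (n - 1) * (\<Sum>j=0..n-2. real ((n - 2) choose j) * (-1) ^ j
                                  * deg_I lam (j + 1) (int p + 1)))))"
  using deg_H_cubic_sums[OF assms] deg_H_binomial_sums[OF assms]
  by (auto simp: powr_realpow)

end
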